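(* Let $i\in\{0,\dots,t-1\}$ and let $i(0),\dots,i(\lg t-1)\in\{0,1\}$ be such that $i=\sum_{k}i(k)\cdot 2^k$. Let $\mathcal Y_i=\{y^{i(k),i(\ell)}_{k,\ell} : 0\le k\le\ell\le\lg t-1\}$, where $y^{i(k),i(\ell)}_{k,\ell}$ is taken to be the empty item (weight and profit $0$) if $i(k)=i(\ell)=0$. Then $p(\mathcal Y_i)=w(\mathcal Y_i)+\left(\binom{i+1}{2}-\frac{i}{3}\right)\cdot 9nB$.
   Context: $n\ge1$ and $B$ are positive integers (in the paper $B=B_n+nX$ with $B_n=\sum_{j=1}^{3n}(3n+1)^j$, $X=3tnB_n$). Let $t$ be a power of two, $\lg$ the base-2 logarithm, $Y=3t^2nB$, and fix a bijection $f:\{0,\dots,\lg t-1\}^2\to\{0,\dots,(\lg t)^2-1\}$. Quadratization items: for each $0\le k<\ell\le\lg t-1$, items $y^{1,0}_{k,\ell}$ with $w=p=3^{f(k,\ell)}Y$; $y^{0,1}_{k,\ell}$ with $w=p=3^{f(\ell,k)}Y$; and $y^{1,1}_{k,\ell}$ with $w=(3^{f(k,\ell)}+3^{f(\ell,k)})Y$ and $p=(3^{f(k,\ell)}+3^{f(\ell,k)})Y+2^{k+\ell}\cdot 9nB$; and for each $0\le k\le\lg t-1$ an item $y^{1,1}_{k,k}$ with $w=3^{f(k,k)}Y$ and $p=3^{f(k,k)}Y+2^{2k}\cdot 4.5nB+2^k\cdot 1.5nB$. For a set $\mathcal S$ of items, $w(\mathcal S)=\sum_{x\in\mathcal S}w(x)$,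 $p(\mathcal S)=\sum_{x\in\mathcal S}p(x)$. *)

theory Defs
  imports Main "HOL.Real"
begin

text \<open>Parameters: n, B (positive integers), L = lg t (so t = 2^L), and the bijection
  f from {0..L-1}^2 onto {0..L^2-1}.  An item y^{a,b}_{k,l} is identified by its label
  (a, b, k, l).  Labels that do not denote an item of the construction, and the
  "empty item" y^{0,0}_{k,l}, get weight and profit 0.\<close>

definition quadY :: "nat \<Rightarrow> nat \<Rightarrow> nat \<Rightarrow> real" where
  "quadY n B L = 3 * (2 ^ L) ^ 2 * real n * real B"

definition item_w :: "nat \<Rightarrow> nat \<Rightarrow> nat \<Rightarrow> (nat \<times> nat \<Rightarrow> nat) \<Rightarrow> nat \<times> nat \<times> nat \<times> nat \<Rightarrow> real" where
  "item_w n B L f x = (case x of (a, b, k, l) \<Rightarrow>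
     if k < l \<and> l < L \<and> a = 1 \<and> b = 0 then 3 ^ f (k, l) * quadY n B L
     else if k < l \<and> l < L \<and> a = 0 \<and> b = 1 then 3 ^ f (l, k) * quadY n B L
     else if k < l \<and> l < L \<and> a = 1 \<and> b = 1 then (3 ^ f (k, l) + 3 ^ f (l, k)) * quadY n B L
     else if k = l \<and> l < L \<and> a = 1 \<and> b = 1 then 3 ^ f (k, k) * quadY n B L
     else 0)"

definition item_p :: "nat \<Rightarrow> nat \<Rightarrow> nat \<Rightarrow> (nat \<times> nat \<Rightarrow> nat) \<Rightarrow> nat \<times> nat \<times> nat \<times> nat \<Rightarrow> real" where
  "item_p n B L f x = (case x of (a, b, k, l) \<Rightarrow>
     if k < l \<and> l < L \<and> a = 1 \<and> b = 0 then 3 ^ f (k, l) * quadY n B L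
     else if k < l \<and> l < L \<and> a = 0 \<and> b = 1 then 3 ^ f (l, k) * quadY n B L
     else if k < l \<and> l < L \<and> a = 1 \<and> b = 1 then
       (3 ^ f (k, l) + 3 ^ f (l, k)) * quadY n B L + 2 ^ (k + l) * 9 * real n * real B
     else if k = l \<and> l < L \<and> a = 1 \<and> b = 1 then
       3 ^ f (k, k) * quadY n B L + 2 ^ (2 * k) * 4.5 * real n * real B + 2 ^ k * 1.5 * real n * real B
     else 0)"

definition set_w where "set_w n B L f S = (\<Sum>x\<in>S. item_w n B L f x)"
definition set_p where "set_p n B L f S = (\<Sum>x\<in>S. item_p n B L f x)"

definition Yset :: "nat \<Rightarrow> (nat \<Rightarrow> nat) \<Rightarrow> (nat \<times> nat \<times> nat \<times> nat) set" where
  "Yset L ib = {(ib k, ib l, k, l) | k l. k \<le> l \<and> l < L}"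

end

theory Submission
  imports Defs
begin

text \<open>Let b be the bits of i and x_l = b_l 2^l, so that i is the sum of the x_l.
  The item with indices k \<le> l adds 9nB x_k x_l to p - w if k < l, and, because
  b_l^2 = b_l, it adds 9nB (x_l^2/2 + x_l/6) if k = l.  So row l adds
  9nB (x_l s + x_l^2/2 + x_l/6), where s = x_0 + ... + x_(l-1): exactly the increase of
  9nB (s^2/2 + s/6) when s grows by x_l.  Hence p - w = 9nB (i^2/2 + i/6), and
  i^2/2 + i/6 = (i+1 choose 2) - i/3.\<close>

definition item_excess :: "nat \<Rightarrow> nat \<Rightarrow> nat \<Rightarrow> nat \<Rightarrow> real" where
  "item_excess a b k l = real (a * b) *
     (if k < l then 2 ^ (k + l) * 9 else 2 ^ (2 * k) * 4.5 + 2 ^ k * 1.5)"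

lemma item_p_eq_item_w_plus_excess:
  assumes "a \<in> {0, 1}" "b \<in> {0, 1}" "k \<le> l" "l < L"
  shows "item_p n B L f (a, b, k, l)
       = item_w n B L f (a, b, k, l) + item_excess a b k l * real n * real B"
  using assms by (auto simp: item_p_def item_w_def item_excess_def algebra_simps)

lemma sum_Yset:
  "(\<Sum>x\<in>Yset L ib. g x) = (\<Sum>l<L. \<Sum>k\<le>l. g (ib k, ib l, k, l))"
proof -
  let ?label = "\<lambda>(l, k). (ib k, ib l, k, l)"
  have "Yset L ib = ?label ` (SIGMA l:{..<L}. {..l})"
    unfolding Yset_def by force
  moreover have "inj_on ?label (SIGMA l:{..<L}. {..l})"
    by (auto simp: inj_on_def)
  ultimately show ?thesis
    by (simp add: sum.reindex sum.Sigma split_def)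
qed

lemma sum_item_excess_row:
  assumes "b l \<in> {0, 1}"
  shows "(\<Sum>k\<le>l. item_excess (b k) (b l) k l)
       = 9 * (real (b l) * 2 ^ l) * real (\<Sum>k<l. b k * 2 ^ k)
         + 4.5 * (real (b l) * 2 ^ l)\<^sup>2 + 1.5 * (real (b l) * 2 ^ l)"
proof -
  have "(\<Sum>k<l. item_excess (b k) (b l) k l)
      = (\<Sum>k<l. 9 * (real (b l) * 2 ^ l) * (real (b k) * 2 ^ k))"
    by (intro sum.cong) (auto simp: item_excess_def power_add)
  moreover have "item_excess (b l) (b l) l l = 4.5 * (real (b l) * 2 ^ l)\<^sup>2 + 1.5 * (real (b l) * 2 ^ l)"
    using assms by (auto simp: item_excess_def power_mult_distrib power_mult mult.commute)
  ultimately show ?thesis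
    by (simp add: lessThan_Suc_atMost[symmetric] sum_distrib_left)
qed

lemma sum_item_excess_triangle:
  assumes "\<forall>k<L. b k \<in> {0, 1}"
  shows "(\<Sum>l<L. \<Sum>k\<le>l. item_excess (b k) (b l) k l)
       = 9 * ((real (\<Sum>k<L. b k * 2 ^ k))\<^sup>2 / 2 + real (\<Sum>k<L. b k * 2 ^ k) / 6)"
  using assms
proof (induction L)
  case 0
  then show ?case by simp
next
  case (Suc L)
  define I where "I = real (\<Sum>k<L. b k * 2 ^ k)"
  define x where "x = real (b L) * 2 ^ L"
  have "(\<Sum>l<Suc L. \<Sum>k\<le>l. item_excess (b k) (b l) k l)
      = 9 * (I\<^sup>2 / 2 + I / 6) + (9 * x * I + 4.5 * x\<^sup>2 + 1.5 * x)"
    using Suc sum_item_excess_row[of b L] by (simp add: I_def x_def)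
  also have "\<dots> = 9 * ((I + x)\<^sup>2 / 2 + (I + x) / 6)"
    by (simp add: power2_sum field_simps)
  also have "I + x = real (\<Sum>k<Suc L. b k * 2 ^ k)"
    by (simp add: I_def x_def)
  finally show ?case .
qed

lemma choose_2_Suc: "real (Suc i choose 2) = real i * (real i + 1) / 2"
  by (induction i) (simp_all add: numeral_2_eq_2 field_simps)

theorem lemma4:
  fixes n B L i :: nat and t :: nat and f :: "nat \<times> nat \<Rightarrow> nat" and ib :: "nat \<Rightarrow> nat"
  assumes "n \<ge> 1" and "B \<ge> 1"
    and "t = 2 ^ L"
    and "bij_betw f ({0..<L} \<times> {0..<L}) {0..<L ^ 2}"
    and "i < t"
    and "\<forall>k<L. ib k \<in> {0, 1}"
    and "i = (\<Sum>k<L. ib k * 2 ^ k)"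
  shows "set_p n B L f (Yset L ib)
       = set_w n B L f (Yset L ib) + (real ((i + 1) choose 2) - real i / 3) * 9 * real n * real B"
proof -
  have "set_p n B L f (Yset L ib)
      = (\<Sum>l<L. \<Sum>k\<le>l. item_w n B L f (ib k, ib l, k, l) + item_excess (ib k) (ib l) k l * real n * real B)"
    unfolding set_p_def sum_Yset using assms(6)
    by (intro sum.cong refl item_p_eq_item_w_plus_excess) auto
  also have "\<dots> = set_w n B L f (Yset L ib)
      + (\<Sum>l<L. \<Sum>k\<le>l. item_excess (ib k) (ib l) k l) * real n * real B"
    by (simp add: set_w_def sum_Yset sum.distrib sum_distrib_right)
  also have "\<dots> = set_w n B L f (Yset L ib) + 9 * ((real i)\<^sup>2 / 2 + real i / 6) * real n * real B"
    by (simp add: sum_item_excess_triangle[OF assms(6)] assms(7)[symmetric])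
  also have "(real i)\<^sup>2 / 2 + real i / 6 = real ((i + 1) choose 2) - real i / 3"
    by (simp add: choose_2_Suc power2_eq_square field_simps)
  finally show ?thesis
    by simp
qed

end
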